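(* Let $p\ge1$ and $s_1,\dots,s_p\in\mathbb{C}^\times$ with $|s_i|\le1$ for all $i$. Then the Newton series $\sum_{n\ge0}(-1)^n\mathtt{s}^{\mathrm{sh}}_{y_{s_1}\cdots y_{s_p}}(n)\binom{z}{n}$ converges absolutely for $\mathrm{Re}(z)>-1$. If moreover $s_1\ne1$, it converges for $\mathrm{Re}(z)>-2$.
   Context: $\mathtt{s}^{\mathrm{sh}}_{y_{s_1}\cdots y_{s_p}}(m)=\sum_{m=m_1\ge\cdots\ge m_p\ge0}\frac{s_1^{m_1-m_2}\cdots s_{p-1}^{m_{p-1}-m_p}s_p^{m_p+1}}{(m_1+1)\cdots(m_p+1)}$ for $m\in\mathbb{Z}_{\ge0}$; $\binom{z}{n}=\frac{z(z-1)\cdots(z-n+1)}{n!}$. *)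

theory Defs
  imports Complex_Main
begin

text \<open>Admissible index tuples: m = m_1 >= m_2 >= ... >= m_p >= 0, encoded as
  functions on nat with indices 0..p-1 (zero outside).\<close>
definition sh_indices :: "nat \<Rightarrow> nat \<Rightarrow> (nat \<Rightarrow> nat) set" where
  "sh_indices p m = {f. f 0 = m \<and> (\<forall>i. Suc i < p \<longrightarrow> f (Suc i) \<le> f i) \<and> (\<forall>i\<ge>p. f i = 0)}"

text \<open>s^sh_{y_{s_1}...y_{s_p}}(m), with s_i written s (i-1).\<close>
definition ssh :: "nat \<Rightarrow> (nat \<Rightarrow> complex) \<Rightarrow> nat \<Rightarrow> complex" where
  "ssh p s m = (\<Sum>f\<in>sh_indices p m.
      (\<Prod>i<p - 1. s i ^ (f i - f (Suc i))) * s (p - 1) ^ (f (p - 1) + 1)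
      / (\<Prod>i<p. of_nat (f i + 1)))"

end

theory Submission
  imports Defs "HOL-Analysis.Analysis" "HOL-Real_Asymp.Real_Asymp"
begin

text \<open>Let \<open>V n = (n + 1) ssh(n)\<close>. Bounding every \<open>s i\<close> by 1, the factor \<open>1/(m_1 + 1) = 1/(n + 1)\<close>
  cancels and the remaining sum over \<open>m_2, ..., m_p \<le> n\<close> is at most \<open>H(n+1)^(p-1)\<close>, a power of a
  logarithm. As \<open>|z choose n| = O(n^(-Re z - 1))\<close>, the terms of the series are
  \<open>O(log(n)^(p-1) n^(-Re z - 2))\<close>, summable for \<open>Re z > -1\<close>.

  The tuples with \<open>m_2 < m_1\<close> contribute exactly \<open>s_1 V(n - 1)\<close> to \<open>V n\<close>, and the remaining
  ones only \<open>O(log(n)^(p-1) / n)\<close>. With \<open>e n = (-1)^n (z choose n) / (n + 1)\<close>, whose differences are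
  \<open>O(n^(-Re z - 3))\<close>, summation by parts applied to \<open>(1 - s_1) V n e n\<close> gains one power of \<open>n\<close>,
  which gives convergence for \<open>Re z > -2\<close> when \<open>s_1 \<noteq> 1\<close>.\<close>

section \<open>Combinatorics of the shuffle coefficients\<close>

lemma norm_of_nat_plus_one: "norm (of_nat n + 1 :: complex) = real n + 1"
  by (metis norm_of_nat of_nat_1 of_nat_add)

lemma norm_of_nat_plus_two: "norm (of_nat n + 2 :: complex) = real n + 2"
  by (metis norm_of_nat of_nat_add of_nat_numeral)

definition ssh_term :: "nat \<Rightarrow> (nat \<Rightarrow> complex) \<Rightarrow> (nat \<Rightarrow> nat) \<Rightarrow> complex" where
  "ssh_term p s f = (\<Prod>i<p - 1. s i ^ (f i - f (Suc i))) * s (p - 1) ^ (f (p - 1) + 1)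
      / (\<Prod>i<p. of_nat (f i + 1))"

lemma ssh_eq_sum_ssh_term: "ssh p s m = (\<Sum>f\<in>sh_indices p m. ssh_term p s f)"
  unfolding ssh_def ssh_term_def ..

lemma sh_indices_le:
  assumes "f \<in> sh_indices p n"
  shows "f i \<le> n"
proof (induction i)
  case 0
  then show ?case using assms by (simp add: sh_indices_def)
next
  case (Suc i)
  then show ?case
    using assms by (cases "Suc i < p") (auto simp: sh_indices_def intro: le_trans)
qed

lemma finite_sh_indices: "finite (sh_indices p n)"
proof (rule finite_subset)
  show "sh_indices p n \<subseteq> {f. \<forall>i. (i \<in> {..<p} \<longrightarrow> f i \<in> {..n}) \<and> (i \<notin> {..<p} \<longrightarrow> f i = 0)}"
    using sh_indices_le by (auto simp: sh_indices_def)
  show "finite \<dots>"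
    by (intro finite_set_of_finite_funs) auto
qed

lemma sh_indices_1: "sh_indices 1 n = {\<lambda>i. if i = 0 then n else 0}"
  unfolding sh_indices_def by (auto simp: fun_eq_iff)

lemma ssh_1: "(of_nat n + 1) * ssh 1 s n = s 0 ^ Suc n"
proof -
  have "(of_nat n + 1 :: complex) \<noteq> 0"
    using norm_of_nat_plus_one[of n] by auto
  then show ?thesis
    unfolding ssh_def sh_indices_1 by (simp add: add.commute)
qed

lemma norm_ssh_term_le:
  assumes "p \<ge> 1" and "\<And>i. i < p \<Longrightarrow> norm (s i) \<le> 1"
  shows "norm (ssh_term p s f) \<le> (\<Prod>i<p. 1 / (real (f i) + 1))"
proof -
  have "norm ((\<Prod>i<p - 1. s i ^ (f i - f (Suc i))) * s (p - 1) ^ (f (p - 1) + 1)) \<le> 1"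
    unfolding norm_mult prod_norm[symmetric] norm_power using assms
    by (intro mult_le_one prod_le_1 power_le_one) (auto intro!: prod_nonneg power_le_one)
  moreover have "norm (\<Prod>i<p. (of_nat (f i + 1) :: complex)) = (\<Prod>i<p. real (f i) + 1)"
    unfolding prod_norm[symmetric] norm_of_nat by (simp add: add.commute)
  moreover have "(\<Prod>i<p. real (f i) + 1) > 0"
    by (intro prod_pos) auto
  ultimately show ?thesis
    unfolding ssh_term_def norm_divide by (simp add: prod_dividef divide_right_mono)
qed

lemma one_le_harm: "n > 0 \<Longrightarrow> (1::real) \<le> harm n"
  using harm_mono[of 1 n] by (simp add: harm_def)

lemma sum_prod_inverse_le_harm_power:
  fixes A :: "nat set" and S :: "(nat \<Rightarrow> nat) set"
  assumes "finite A" and "finite S" and "inj_on (\<lambda>f. restrict f A) S"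
    and "\<And>f i. f \<in> S \<Longrightarrow> i \<in> A \<Longrightarrow> f i \<le> n"
  shows "(\<Sum>f\<in>S. \<Prod>i\<in>A. 1 / (real (f i) + 1)) \<le> harm (Suc n) ^ card A"
proof -
  define w where "w h = (\<Prod>i\<in>A. 1 / (real (h i) + 1))" for h :: "nat \<Rightarrow> nat"
  have "(\<Sum>f\<in>S. \<Prod>i\<in>A. 1 / (real (f i) + 1)) = (\<Sum>f\<in>S. w (restrict f A))"
    unfolding w_def by (intro sum.cong prod.cong) auto
  also have "\<dots> = (\<Sum>h\<in>(\<lambda>f. restrict f A) ` S. w h)"
    using sum.reindex[OF assms(3), of w] by simp
  also have "\<dots> \<le> (\<Sum>h\<in>PiE A (\<lambda>_. {..n}). w h)"
    using assms by (intro sum_mono2 finite_PiE) (auto simp: w_def intro!: prod_nonneg)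
  also have "\<dots> = (\<Prod>i\<in>A. \<Sum>k\<le>n. 1 / (real k + 1))"
    unfolding w_def using assms(1) by (intro prod_sum_PiE[symmetric]) auto
  also have "\<dots> = harm (Suc n) ^ card A"
    by (simp add: harm_altdef lessThan_Suc_atMost[symmetric] inverse_eq_divide add.commute)
  finally show ?thesis .
qed

lemma sum_prod_inverse_sh_indices_le:
  assumes "S \<subseteq> sh_indices p n" and "k \<le> p" and "\<And>f i. f \<in> S \<Longrightarrow> i < k \<Longrightarrow> f i = n"
  shows "(\<Sum>f\<in>S. \<Prod>i<p. 1 / (real (f i) + 1)) \<le> harm (Suc n) ^ (p - k) / (real n + 1) ^ k"
proof -
  have split: "{..<p} = {..<k} \<union> {k..<p}"
    using assms(2) by auto
  have "(\<Sum>f\<in>S. \<Prod>i<p. 1 / (real (f i) + 1)) = (\<Sum>f\<in>S. \<Prod>i\<in>{k..<p}. 1 / (real (f i) + 1)) / (real n + 1) ^ k"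
    unfolding sum_divide_distrib split
    by (intro sum.cong refl, subst prod.union_disjoint) (auto simp: assms(3) power_one_over)
  also have "\<dots> \<le> harm (Suc n) ^ card {k..<p} / (real n + 1) ^ k"
  proof (intro divide_right_mono sum_prod_inverse_le_harm_power)
    show "finite S"
      using finite_subset[OF assms(1) finite_sh_indices] .
    show "inj_on (\<lambda>f. restrict f {k..<p}) S"
    proof (rule inj_onI, rule ext)
      fix f g i
      assume f: "f \<in> S" and g: "g \<in> S" and eq: "restrict f {k..<p} = restrict g {k..<p}"
      consider "i < k" | "i \<ge> p" | "i \<in> {k..<p}"
        by force
      then show "f i = g i"
      proof cases
        case 1
        then show ?thesis using f g assms(3) by metis
      next
        case 2
        moreover have "f \<in> sh_indices p n" "g \<in> sh_indices p n"
          using f g assms(1) by auto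
        ultimately show ?thesis by (simp add: sh_indices_def)
      next
        case 3
        then show ?thesis using fun_cong[OF eq, of i] by simp
      qed
    qed
  qed (use assms(1) sh_indices_le in auto)
  finally show ?thesis by simp
qed

lemma norm_ssh_le:
  assumes "p \<ge> 1" and "\<And>i. i < p \<Longrightarrow> norm (s i) \<le> 1"
  shows "norm ((of_nat n + 1) * ssh p s n) \<le> harm (Suc n) ^ (p - 1)"
proof -
  have "norm ((of_nat n + 1) * ssh p s n) \<le> (real n + 1) * (\<Sum>f\<in>sh_indices p n. \<Prod>i<p. 1 / (real (f i) + 1))"
    unfolding ssh_eq_sum_ssh_term norm_mult
    by (intro mult_mono order.trans[OF norm_sum] sum_mono norm_ssh_term_le assms)
       (auto simp: norm_of_nat_plus_one intro!: sum_nonneg prod_nonneg)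
  also have "\<dots> \<le> (real n + 1) * (harm (Suc n) ^ (p - 1) / (real n + 1) ^ 1)"
    using assms(1) by (intro mult_left_mono sum_prod_inverse_sh_indices_le) (auto simp: sh_indices_def)
  finally show ?thesis by simp
qed

lemma ssh_term_Suc_Suc:
  "ssh_term (Suc (Suc q)) s f
     = s 0 ^ (f 0 - f 1) / (of_nat (f 0) + 1) * ssh_term (Suc q) (\<lambda>i. s (Suc i)) (\<lambda>i. f (Suc i))"
  unfolding ssh_term_def diff_Suc_1 prod.lessThan_Suc_shift[of _ "Suc q"] prod.lessThan_Suc_shift[of _ q]
  by (simp add: divide_inverse mult_ac)

lemma ssh_term_update_0:
  assumes "p \<ge> 2" and "g \<in> sh_indices p n"
  shows "(of_nat n + 2) * ssh_term p s (g(0 := Suc n)) = s 0 * ((of_nat n + 1) * ssh_term p s g)"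
proof -
  obtain q where q: "p = Suc (Suc q)"
    using assms(1) by (intro that[of "p - 2"]) simp
  have "g 0 = n" and "g 1 \<le> n"
    using assms(2) sh_indices_le[OF assms(2), of 1] by (auto simp: sh_indices_def)
  moreover have "(of_nat n + 2 :: complex) \<noteq> 0" "(of_nat n + 1 :: complex) \<noteq> 0"
    using norm_of_nat_plus_two[of n] norm_of_nat_plus_one[of n] by auto
  ultimately show ?thesis
    unfolding q ssh_term_Suc_Suc by (simp add: Suc_diff_le field_simps)
qed

lemma ssh_Suc_eq:
  assumes "p \<ge> 2"
  shows "(of_nat n + 2) * ssh p s (Suc n)
           = s 0 * ((of_nat n + 1) * ssh p s n)
             + (of_nat n + 2) * (\<Sum>f\<in>{f\<in>sh_indices p (Suc n). f 1 = Suc n}. ssh_term p s f)"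
proof -
  let ?I = "sh_indices p (Suc n)"
  have "(\<Sum>f\<in>?I - {f. f 1 = Suc n}. (of_nat n + 2) * ssh_term p s f)
          = (\<Sum>g\<in>sh_indices p n. (of_nat n + 2) * ssh_term p s (g(0 := Suc n)))"
  proof (rule sum.reindex_bij_witness[where i = "\<lambda>g. g(0 := Suc n)" and j = "\<lambda>f. f(0 := n)"])
    fix f
    assume f: "f \<in> ?I - {f. f 1 = Suc n}"
    then have "f 0 = Suc n" and "f 1 \<le> n"
      using sh_indices_le[of f p "Suc n" 1] by (auto simp: sh_indices_def)
    then show "(f(0 := n))(0 := Suc n) = f" and "f(0 := n) \<in> sh_indices p n"
      using f assms by (auto simp: sh_indices_def less_Suc_eq_0_disj)
  next
    fix g
    assume g: "g \<in> sh_indices p n"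
    then show "(g(0 := Suc n))(0 := n) = g" and "g(0 := Suc n) \<in> ?I - {f. f 1 = Suc n}"
      using sh_indices_le[of g p n 1] assms by (auto simp: sh_indices_def less_Suc_eq_0_disj)
  qed (auto simp: sh_indices_def fun_upd_idem)
  also have "\<dots> = s 0 * ((of_nat n + 1) * ssh p s n)"
    unfolding ssh_eq_sum_ssh_term sum_distrib_left using assms
    by (intro sum.cong refl ssh_term_update_0)
  finally show ?thesis
    unfolding ssh_eq_sum_ssh_term sum_distrib_left
    using sum.Int_Diff[OF finite_sh_indices, of "\<lambda>f. (of_nat n + 2) * ssh_term p s f" p "Suc n" "{f. f 1 = Suc n}"]
    by (simp add: Int_def add.commute)
qed

lemma norm_ssh_Suc_diff_le:
  assumes "p \<ge> 1" and "\<And>i. i < p \<Longrightarrow> norm (s i) \<le> 1"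
  shows "norm ((of_nat n + 2) * ssh p s (Suc n) - s 0 * ((of_nat n + 1) * ssh p s n))
           \<le> harm (Suc (Suc n)) ^ (p - 1) / (real n + 2)"
proof (cases "p = 1")
  case True
  have "(of_nat n + 2) * ssh 1 s (Suc n) = s 0 ^ Suc (Suc n)"
    using ssh_1[of "Suc n" s] by (simp add: add.commute)
  then show ?thesis
    using True ssh_1[of n s] by (simp add: add.commute)
next
  case False
  let ?S = "{f\<in>sh_indices p (Suc n). f 1 = Suc n}"
  have "norm ((of_nat n + 2) * ssh p s (Suc n) - s 0 * ((of_nat n + 1) * ssh p s n))
          = (real n + 2) * norm (\<Sum>f\<in>?S. ssh_term p s f)"
    using False assms(1) ssh_Suc_eq[of p n s] by (simp add: norm_mult norm_of_nat_plus_two)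
  also have "\<dots> \<le> (real n + 2) * (harm (Suc (Suc n)) ^ (p - 2) / (real (Suc n) + 1) ^ 2)"
    using False assms
    by (intro mult_left_mono order.trans[OF norm_sum] order.trans[OF sum_mono sum_prod_inverse_sh_indices_le]
          norm_ssh_term_le)
       (auto simp: sh_indices_def numeral_2_eq_2 less_Suc_eq)
  also have "\<dots> = harm (Suc (Suc n)) ^ (p - 2) / (real n + 2)"
    by (simp add: power2_eq_square add.commute)
  also have "\<dots> \<le> harm (Suc (Suc n)) ^ (p - 1) / (real n + 2)"
    using one_le_harm[of "Suc (Suc n)"] by (intro divide_right_mono power_increasing) auto
  finally show ?thesis .
qed

section \<open>Asymptotics\<close>

lemma harm_Suc_le_one_plus_ln: "harm (Suc n) \<le> 1 + ln (real n + 1)"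
proof -
  have "harm (Suc n) - ln (real (Suc n)) \<le> harm (Suc 0) - ln (real (Suc 0))"
    using decseq_harm_diff_ln unfolding decseq_def by blast
  then show ?thesis
    by (simp add: harm_def add.commute)
qed

lemma harm_Suc_power_le: "harm (Suc n) ^ k \<le> (1 + ln (real n + 1)) ^ k"
  using one_le_harm[of "Suc n"] by (intro power_mono harm_Suc_le_one_plus_ln) auto

lemma norm_gbinomial_bigo:
  fixes z :: complex
  shows "(\<lambda>n. norm (z gchoose n)) \<in> O(\<lambda>n. real n powr (- (Re z + 1)))"
proof -
  define g where "g n = (-1) ^ n / exp ((z + 1) * of_real (ln (real n)))" for n
  have "(\<lambda>n. z gchoose n) \<in> O(g)"
    unfolding g_def by (rule bigoI_tendsto[OF gbinomial_asymptotic]) simp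
  then have "(\<lambda>n. norm (z gchoose n)) \<in> O(\<lambda>n. norm (g n))"
    by simp
  also have "(\<lambda>n. norm (g n)) \<in> O(\<lambda>n. real n powr (- (Re z + 1)))"
  proof (rule landau_o.big_mono)
    show "\<forall>\<^sub>F n in sequentially. norm (norm (g n)) \<le> norm (real n powr (- (Re z + 1)))"
      using eventually_gt_at_top[of 0]
      by eventually_elim (unfold powr_minus, simp add: g_def norm_divide norm_power powr_def inverse_eq_divide)
  qed
  finally show ?thesis .
qed

lemma log_power_gbinomial_bigo:
  fixes z :: complex
  shows "(\<lambda>n. (1 + ln (real n + 1)) ^ k * (norm (z gchoose n) / (real n + 1) ^ j))
           \<in> O(\<lambda>n. (1 + ln (real n + 1)) ^ k * real n powr (- (Re z + 1 + j)))"
proof (rule landau_o.big.mult[OF landau_o.big_refl])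
  have "(\<lambda>n. norm (z gchoose n) * (1 / (real n + 1) ^ j))
          \<in> O(\<lambda>n. real n powr (- (Re z + 1)) * (1 / (real n + 1) ^ j))"
    by (intro landau_o.big.mult norm_gbinomial_bigo landau_o.big_refl)
  also have "(\<lambda>n. real n powr (- (Re z + 1)) * (1 / (real n + 1) ^ j)) \<in> O(\<lambda>n. real n powr (- (Re z + 1 + j)))"
    by real_asymp
  finally show "(\<lambda>n. norm (z gchoose n) / (real n + 1) ^ j) \<in> O(\<lambda>n. real n powr (- (Re z + 1 + j)))"
    by simp
qed

lemma summable_log_power_gbinomial:
  fixes z :: complex
  assumes "Re z + j > 0"
  shows "summable (\<lambda>n. (1 + ln (real n + 1)) ^ k * (norm (z gchoose n) / (real n + 1) ^ j))"
proof (rule summable_comparison_test_bigo)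
  define a where "a = Re z + 1 + j"
  have "a > 1"
    using assms by (simp add: a_def)
  have "(\<lambda>n. (1 + ln (real n + 1)) ^ k * real n powr (- a)) \<in> o(\<lambda>n. real n powr (- (a + 1) / 2))"
    using \<open>a > 1\<close> by real_asymp
  with log_power_gbinomial_bigo[of k z j]
  show "(\<lambda>n. (1 + ln (real n + 1)) ^ k * (norm (z gchoose n) / (real n + 1) ^ j))
          \<in> O(\<lambda>n. real n powr (- (a + 1) / 2))"
    unfolding a_def by (blast intro: landau_o.big_small_trans landau_o.small_imp_big)
  show "summable (\<lambda>n. norm (real n powr (- (a + 1) / 2)))"
    using \<open>a > 1\<close> by (simp add: summable_real_powr_iff)
qed

lemma tendsto_log_power_gbinomial:
  fixes z :: complex
  assumes "Re z + 1 + j > 0"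
  shows "(\<lambda>n. (1 + ln (real n + 1)) ^ k * (norm (z gchoose n) / (real n + 1) ^ j)) \<longlonglongrightarrow> 0"
proof -
  define a where "a = Re z + 1 + j"
  have "a > 0"
    using assms by (simp add: a_def)
  have "(\<lambda>n. (1 + ln (real n + 1)) ^ k * real n powr (- a)) \<in> o(\<lambda>_. 1)"
    using \<open>a > 0\<close> by real_asymp
  with log_power_gbinomial_bigo[of k z j]
  have "(\<lambda>n. (1 + ln (real n + 1)) ^ k * (norm (z gchoose n) / (real n + 1) ^ j)) \<in> o(\<lambda>_. 1)"
    unfolding a_def by (rule landau_o.big_small_trans)
  then show ?thesis
    using smalloD_tendsto by fastforce
qed

section \<open>Convergence of the Newton series\<close>

lemma summable_by_parts_shift:
  fixes V e :: "nat \<Rightarrow> 'a::{real_normed_field,banach}"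
  assumes "c \<noteq> 1"
    and "summable (\<lambda>n. (V (Suc n) - c * V n) * e (Suc n))"
    and "summable (\<lambda>n. V n * (e (Suc n) - e n))"
    and "(\<lambda>n. V n * e n) \<longlonglongrightarrow> 0"
  shows "summable (\<lambda>n. V n * e n)"
proof -
  have "summable (\<lambda>n. (V (Suc n) - c * V n) * e (Suc n) + c * (V n * (e (Suc n) - e n))
                      + c * (V n * e n - V (Suc n) * e (Suc n)))"
    using assms(2-4) by (intro summable_add summable_mult telescope_summable')
  also have "(\<lambda>n. (V (Suc n) - c * V n) * e (Suc n) + c * (V n * (e (Suc n) - e n))
                      + c * (V n * e n - V (Suc n) * e (Suc n)))
           = (\<lambda>n. (1 - c) * (V (Suc n) * e (Suc n)))"
    by (simp add: algebra_simps)
  finally have "summable (\<lambda>n. (1 - c) * (V (Suc n) * e (Suc n)))" .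
  then show ?thesis
    using assms(1) summable_Suc_iff[of "\<lambda>n. V n * e n"] by simp
qed

lemma gbinomial_alternating_step:
  fixes z :: complex
  shows "(-1) ^ Suc n * (z gchoose Suc n) / (of_nat n + 2) - (-1) ^ n * (z gchoose n) / (of_nat n + 1)
           = - (z + 2) * ((-1) ^ n * (z gchoose n)) / ((of_nat n + 1) * (of_nat n + 2))"
proof -
  have recurrence: "(of_nat n + 1) * (z gchoose Suc n) = (z - of_nat n) * (z gchoose n)"
    using gbinomial_mult_1[of z n] by (simp add: algebra_simps)
  have "(of_nat n + 1 :: complex) \<noteq> 0" "(of_nat n + 2 :: complex) \<noteq> 0"
    using norm_of_nat_plus_one[of n] norm_of_nat_plus_two[of n] by auto
  define c where "c = (-1) ^ n * (z gchoose n)"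
  have "(of_nat n + 1) * ((-1) ^ Suc n * (z gchoose Suc n))
          = - ((-1) ^ n * ((of_nat n + 1) * (z gchoose Suc n)))"
    by (simp add: algebra_simps)
  also have "\<dots> = (of_nat n - z) * c"
    unfolding recurrence c_def by (simp add: algebra_simps)
  finally show ?thesis
    using \<open>(of_nat n + 1 :: complex) \<noteq> 0\<close> \<open>(of_nat n + 2 :: complex) \<noteq> 0\<close>
    unfolding c_def[symmetric] by (simp add: field_simps)
qed

lemma norm_gbinomial_alternating_diff_le:
  fixes z :: complex
  shows "norm ((-1) ^ Suc n * (z gchoose Suc n) / (of_nat (Suc n) + 1) - (-1) ^ n * (z gchoose n) / (of_nat n + 1))
           \<le> norm (z + 2) * (norm (z gchoose n) / (real n + 1) ^ 2)"
proof -
  have shift: "of_nat (Suc n) + 1 = (of_nat n + 2 :: complex)"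
    by simp
  have "norm ((-1) ^ Suc n * (z gchoose Suc n) / (of_nat (Suc n) + 1) - (-1) ^ n * (z gchoose n) / (of_nat n + 1))
          = norm (z + 2) * norm (z gchoose n) / ((real n + 1) * (real n + 2))"
    unfolding shift gbinomial_alternating_step
    using norm_minus_cancel[of "z + 2"]
    by (simp add: norm_mult norm_divide norm_power norm_of_nat_plus_one norm_of_nat_plus_two)
  also have "\<dots> \<le> norm (z + 2) * (norm (z gchoose n) / (real n + 1) ^ 2)"
    by (simp add: power2_eq_square frac_le)
  finally show ?thesis .
qed

lemma summable_norm_ssh_gbinomial:
  fixes z :: complex
  assumes "p \<ge> 1" and "\<And>i. i < p \<Longrightarrow> norm (s i) \<le> 1" and "Re z > -1"
  shows "summable (\<lambda>n. norm ((-1) ^ n * ssh p s n * (z gchoose n)))"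
proof (rule summable_comparison_test'[OF summable_log_power_gbinomial[of z 1 "p - 1"]])
  show "Re z + real 1 > 0"
    using assms(3) by simp
  fix n
  have "norm (norm ((-1) ^ n * ssh p s n * (z gchoose n)))
          = norm ((of_nat n + 1) * ssh p s n) * (norm (z gchoose n) / (real n + 1))"
    by (simp add: norm_mult norm_power norm_of_nat_plus_one)
  also have "\<dots> \<le> (1 + ln (real n + 1)) ^ (p - 1) * (norm (z gchoose n) / (real n + 1))"
    using assms by (intro mult_right_mono order.trans[OF norm_ssh_le harm_Suc_power_le]) auto
  finally show "norm (norm ((-1) ^ n * ssh p s n * (z gchoose n)))
                  \<le> (1 + ln (real n + 1)) ^ (p - 1) * (norm (z gchoose n) / (real n + 1) ^ 1)"
    by simp
qed

lemma summable_ssh_diff_gbinomial: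
  fixes z :: complex
  assumes "p \<ge> 1" and "\<And>i. i < p \<Longrightarrow> norm (s i) \<le> 1" and "Re z > -2"
  shows "summable (\<lambda>n. ((of_nat (Suc n) + 1) * ssh p s (Suc n) - s 0 * ((of_nat n + 1) * ssh p s n))
                       * ((-1) ^ Suc n * (z gchoose Suc n) / (of_nat (Suc n) + 1)))"
proof -
  define G where "G n = (1 + ln (real n + 1)) ^ (p - 1) * (norm (z gchoose n) / (real n + 1) ^ 2)" for n
  have "summable G"
    unfolding G_def using assms(3) by (intro summable_log_power_gbinomial) auto
  then have "summable (\<lambda>n. G (Suc n))"
    by (subst summable_Suc_iff)
  then show ?thesis
  proof (rule summable_comparison_test')
    fix n
    let ?D = "(of_nat (Suc n) + 1) * ssh p s (Suc n) - s 0 * ((of_nat n + 1) * ssh p s n)"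
    have "norm (?D * ((-1) ^ Suc n * (z gchoose Suc n) / (of_nat (Suc n) + 1)))
            = norm ?D * (norm (z gchoose Suc n) / (real (Suc n) + 1))"
      using norm_of_nat_plus_one[of "Suc n"] by (simp add: norm_mult norm_divide norm_power del: of_nat_Suc)
    also have "\<dots> \<le> (1 + ln (real (Suc n) + 1)) ^ (p - 1) / (real (Suc n) + 1)
                       * (norm (z gchoose Suc n) / (real (Suc n) + 1))"
      using order.trans[OF norm_ssh_Suc_diff_le[OF assms(1,2)] divide_right_mono[OF harm_Suc_power_le]]
      by (intro mult_right_mono) (simp_all add: add.commute add.left_commute)
    also have "\<dots> = G (Suc n)"
      by (simp add: G_def power2_eq_square)
    finally show "norm (?D * ((-1) ^ Suc n * (z gchoose Suc n) / (of_nat (Suc n) + 1))) \<le> G (Suc n)" .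
  qed
qed

lemma summable_ssh_gbinomial:
  fixes z :: complex
  assumes "p \<ge> 1" and "\<And>i. i < p \<Longrightarrow> norm (s i) \<le> 1" and "s 0 \<noteq> 1" and "Re z > -2"
  shows "summable (\<lambda>n. (-1) ^ n * ssh p s n * (z gchoose n))"
proof -
  define V where "V n = (of_nat n + 1) * ssh p s n" for n
  define e where "e n = (-1) ^ n * (z gchoose n) / (of_nat n + 1)" for n
  define G where "G j n = (1 + ln (real n + 1)) ^ (p - 1) * (norm (z gchoose n) / (real n + 1) ^ j)"
    for j n
  have V: "norm (V n) \<le> (1 + ln (real n + 1)) ^ (p - 1)" for n
    unfolding V_def using assms(1,2) by (rule order.trans[OF norm_ssh_le harm_Suc_power_le])
  have "summable (\<lambda>n. V n * e n)"
  proof (rule summable_by_parts_shift[OF assms(3)])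
    have "summable (G 2)"
      unfolding G_def using assms(4) by (intro summable_log_power_gbinomial) auto
    show "summable (\<lambda>n. (V (Suc n) - s 0 * V n) * e (Suc n))"
      unfolding V_def e_def using assms(1,2,4) by (rule summable_ssh_diff_gbinomial)
    show "summable (\<lambda>n. V n * (e (Suc n) - e n))"
    proof (rule summable_comparison_test'[OF summable_mult[OF \<open>summable (G 2)\<close>, of "norm (z + 2)"]])
      fix n
      have "norm (e (Suc n) - e n) \<le> norm (z + 2) * (norm (z gchoose n) / (real n + 1) ^ 2)"
        unfolding e_def by (rule norm_gbinomial_alternating_diff_le)
      then have "norm (V n * (e (Suc n) - e n))
                   \<le> (1 + ln (real n + 1)) ^ (p - 1) * (norm (z + 2) * (norm (z gchoose n) / (real n + 1) ^ 2))"
        unfolding norm_mult by (intro mult_mono V) auto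
      then show "norm (V n * (e (Suc n) - e n)) \<le> norm (z + 2) * G 2 n"
        by (simp add: G_def mult.left_commute)
    qed
    show "(\<lambda>n. V n * e n) \<longlonglongrightarrow> 0"
    proof (rule Lim_null_comparison[OF always_eventually])
      show "\<forall>n. norm (V n * e n) \<le> G 1 n"
      proof
        fix n
        have "norm (V n * e n) = norm (V n) * (norm (z gchoose n) / (real n + 1))"
          by (simp add: e_def norm_mult norm_divide norm_power norm_of_nat_plus_one)
        also have "\<dots> \<le> G 1 n"
          unfolding G_def power_one_right by (intro mult_right_mono V) auto
        finally show "norm (V n * e n) \<le> G 1 n" .
      qed
      show "G 1 \<longlonglongrightarrow> 0"
        unfolding G_def using assms(4) by (intro tendsto_log_power_gbinomial) auto
    qed
  qed
  moreover have "(-1) ^ n * ssh p s n * (z gchoose n) = V n * e n" for n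
    using norm_of_nat_plus_one[of n] by (auto simp: V_def e_def)
  ultimately show ?thesis
    by simp
qed

theorem proposition3p14:
  fixes p :: nat and s :: "nat \<Rightarrow> complex"
  assumes "p \<ge> 1"
    and "\<And>i. i < p \<Longrightarrow> s i \<noteq> 0"
    and "\<And>i. i < p \<Longrightarrow> norm (s i) \<le> 1"
  shows "(\<forall>z::complex. Re z > -1 \<longrightarrow>
            summable (\<lambda>n. norm ((-1) ^ n * ssh p s n * (z gchoose n))))
       \<and> (s 0 \<noteq> 1 \<longrightarrow> (\<forall>z::complex. Re z > -2 \<longrightarrow>
            summable (\<lambda>n. (-1) ^ n * ssh p s n * (z gchoose n))))"
  using assms(1,3) summable_norm_ssh_gbinomial[of p s] summable_ssh_gbinomial[of p s]
  by blast

end
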